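(* Let $t,k,n$ be positive integers with $t\le k\le n$ and $n\ge (t+1)(k-t+1)$. Let $\mathcal F=\{F\in\binom{[n]}{k}:[t]\subseteq F\}$ and $\mathcal G=\mathcal A(n,k,t)=\{G\in\binom{[n]}{k}: |G\cap[t+2]|\ge t+1\}$. Then ${\rm co}_2(\mathcal G)\le{\rm co}_2(\mathcal F)$, and equality holds only if $k=t+1$ and $n=2t+2$; in this case $\mathcal F\cong\mathcal G^c=\{[n]\setminus G: G\in\mathcal G\}$.
   Context: For $\mathcal H\subseteq\binom{[n]}{k}$ and $E\subseteq[n]$, $d(E)=|\{H\in\mathcal H:E\subseteq H\}|$, and ${\rm co}_2(\mathcal H)=\sum_{E\in\binom{[n]}{k-1}}d(E)^2$. $\cong$ means equality up to a permutation of $[n]$. *)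

theory Defs
  imports Main
begin

definition deg :: "nat set set \<Rightarrow> nat set \<Rightarrow> nat" where
  "deg H E = card {F \<in> H. E \<subseteq> F}"

definition co2 :: "nat \<Rightarrow> nat \<Rightarrow> nat set set \<Rightarrow> nat" where
  "co2 n k H = (\<Sum>E \<in> {E. E \<subseteq> {1..n} \<and> card E = k - 1}. (deg H E)^2)"

definition ksubsets :: "nat \<Rightarrow> nat \<Rightarrow> nat set set" where
  "ksubsets n k = {F. F \<subseteq> {1..n} \<and> card F = k}"

definition iso_fam :: "nat \<Rightarrow> nat set set \<Rightarrow> nat set set \<Rightarrow> bool" where
  "iso_fam n A B = (\<exists>\<sigma>. bij_betw \<sigma> {1..n} {1..n} \<and> (\<lambda>X. \<sigma> ` X) ` A = B)"

end

theory Submission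
  imports Defs
begin

(*
  Both families consist of the k-subsets of [n] that miss at most r points of a fixed set S:
  S = [t], r = 0 for F and S = [t+2], r = 1 for G. For such a family the degree of a
  (k-1)-set E depends only on m = |S - E|: it is n-k+1 if m <= r, r+1 if m = r+1, and 0
  otherwise. Grouping the (k-1)-sets by |E /\ S| turns co2 into a sum of two or three
  binomial terms. For k = t+1 the comparison becomes (2t+2)(t+2) <= n(n-t), with equality
  only for n = 2t+2. For k >= t+2 the absorption identities for binomial coefficients reduce
  the strict inequality to a polynomial one in t, k-t and n-k, which is where
  n >= (t+1)(k-t+1) enters. In the equality case G consists of the (t+1)-subsets of [t+2],
  whose complements are the (t+1)-sets containing the t-set {t+3..n}, just as F consists of
  the (t+1)-sets containing [t].
*)

lemma card_subsets_with_card_Int: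
  assumes "finite U" "S \<subseteq> U" "i \<le> c"
  shows "card {E. E \<subseteq> U \<and> card E = c \<and> card (E \<inter> S) = i}
       = (card S choose i) * (card (U - S) choose (c - i))"
proof -
  let ?PA = "{A. A \<subseteq> S \<and> card A = i}"
  let ?PB = "{B. B \<subseteq> U - S \<and> card B = c - i}"
  have fin: "finite S" "finite (U - S)"
    using assms finite_subset by auto
  have split: "{E. E \<subseteq> U \<and> card E = c \<and> card (E \<inter> S) = i} = (\<lambda>(A, B). A \<union> B) ` (?PA \<times> ?PB)"
  proof (intro set_eqI iffI)
    fix E assume E: "E \<in> {E. E \<subseteq> U \<and> card E = c \<and> card (E \<inter> S) = i}"
    then have "card (E - S) = c - i"
      using card_Int_Diff[of E S] finite_subset[OF _ assms(1)] by auto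
    with E show "E \<in> (\<lambda>(A, B). A \<union> B) ` (?PA \<times> ?PB)"
      by (intro image_eqI[where x = "(E \<inter> S, E - S)"]) auto
  next
    fix E assume "E \<in> (\<lambda>(A, B). A \<union> B) ` (?PA \<times> ?PB)"
    then obtain A B where AB: "A \<subseteq> S" "card A = i" "B \<subseteq> U - S" "card B = c - i" "E = A \<union> B"
      by auto
    have "finite A" "finite B"
      by (metis AB(1,3) fin finite_subset)+
    then have "card E = card A + card B"
      using AB(1,3) by (subst AB(5), intro card_Un_disjoint) auto
    moreover have "E \<inter> S = A"
      using AB by auto
    ultimately show "E \<in> {E. E \<subseteq> U \<and> card E = c \<and> card (E \<inter> S) = i}"
      using AB assms(2,3) by auto
  qed
  have "inj_on (\<lambda>(A, B). A \<union> B) (?PA \<times> ?PB)"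
    by (rule inj_onI) (clarsimp, blast)
  then show ?thesis
    unfolding split using fin by (simp add: card_image card_cartesian_product n_subsets)
qed

lemma sum_subsets_by_card_Int:
  fixes g :: "nat \<Rightarrow> 'a::comm_semiring_1"
  assumes "finite U" "S \<subseteq> U"
  shows "(\<Sum>E | E \<subseteq> U \<and> card E = c. g (card (E \<inter> S)))
       = (\<Sum>i\<le>c. of_nat ((card S choose i) * (card (U - S) choose (c - i))) * g i)"
proof -
  let ?Ec = "{E. E \<subseteq> U \<and> card E = c}"
  have fin: "finite ?Ec"
    using assms(1) by (rule finite_subset[rotated, OF finite_Pow_iff[THEN iffD2]]) auto
  have "card (E \<inter> S) \<le> c" if "E \<in> ?Ec" for E
    using that assms(1) by (metis (mono_tags) card_mono finite_subset inf_le1 mem_Collect_eq)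
  then have "(\<Sum>E\<in>?Ec. g (card (E \<inter> S)))
      = (\<Sum>i\<le>c. \<Sum>E | E \<in> ?Ec \<and> card (E \<inter> S) = i. g (card (E \<inter> S)))"
    using fin by (intro sum.group[symmetric]) auto
  also have "\<dots> = (\<Sum>i\<le>c. of_nat (card {E. E \<subseteq> U \<and> card E = c \<and> card (E \<inter> S) = i}) * g i)"
    by (intro sum.cong) (simp_all add: conj_assoc)
  also have "\<dots> = (\<Sum>i\<le>c. of_nat ((card S choose i) * (card (U - S) choose (c - i))) * g i)"
    using assms by (simp add: card_subsets_with_card_Int)
  finally show ?thesis .
qed

lemma sum_atMost_eq_sum_over_support:
  fixes f :: "nat \<Rightarrow> 'a::comm_monoid_add"
  assumes "finite A" "\<And>i. i \<notin> A \<Longrightarrow> f i = 0"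
  shows "(\<Sum>i\<le>c. f i) = (\<Sum>i\<in>A. if i \<le> c then f i else 0)"
proof -
  have "(\<Sum>i\<le>c. f i) = (\<Sum>i\<in>A \<inter> {..c}. f i)"
    using assms by (intro sum.mono_neutral_right) auto
  also have "\<dots> = (\<Sum>i\<in>A. if i \<le> c then f i else 0)"
    using assms(1) by (simp add: sum.inter_restrict)
  finally show ?thesis .
qed

lemma deg_eq_card_extensions:
  assumes "H \<subseteq> ksubsets n k" "E \<subseteq> {1..n}" "card E = k - 1" "1 \<le> k"
  shows "deg H E = card {x \<in> {1..n} - E. insert x E \<in> H}"
proof -
  have finE: "finite E"
    using assms(2) finite_subset by blast
  have extensions: "{F \<in> H. E \<subseteq> F} = (\<lambda>x. insert x E) ` {x \<in> {1..n} - E. insert x E \<in> H}"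
  proof (intro set_eqI iffI)
    fix F assume F: "F \<in> {F \<in> H. E \<subseteq> F}"
    then have "F \<subseteq> {1..n}" "card F = k"
      using assms(1) by (auto simp: ksubsets_def)
    then have "card (F - E) = 1"
      using F assms(3,4) finE by (simp add: card_Diff_subset)
    then obtain x where "F - E = {x}"
      by (rule card_1_singletonE)
    then have "F = insert x E" "x \<in> F - E"
      using F by auto
    with F \<open>F \<subseteq> {1..n}\<close> show "F \<in> (\<lambda>x. insert x E) ` {x \<in> {1..n} - E. insert x E \<in> H}"
      by (intro image_eqI[where x = x]) auto
  qed auto
  have "inj_on (\<lambda>x. insert x E) {x \<in> {1..n} - E. insert x E \<in> H}"
    by (rule inj_onI) blast
  then show ?thesis
    unfolding deg_def extensions by (rule card_image)
qed

definition missing_at_most :: "nat \<Rightarrow> nat \<Rightarrow> nat set \<Rightarrow> nat \<Rightarrow> nat set set" where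
  "missing_at_most n k S r = {X \<in> ksubsets n k. card (S - X) \<le> r}"

lemma deg_missing_at_most:
  assumes "S \<subseteq> {1..n}" "E \<subseteq> {1..n}" "card E = k - 1" "1 \<le> k"
  shows "deg (missing_at_most n k S r) E =
    (if card (S - E) \<le> r then n + 1 - k else if card (S - E) = r + 1 then r + 1 else 0)"
proof -
  have finE: "finite E" and finS: "finite S"
    using assms(1,2) finite_subset by auto
  have ext: "insert x E \<in> missing_at_most n k S r \<longleftrightarrow> card (S - E) \<le> r + (if x \<in> S then 1 else 0)"
    if "x \<in> {1..n} - E" for x
  proof -
    have "card (S - insert x E) = card (S - E) - (if x \<in> S then 1 else 0)"
      using that finS by auto
    moreover have "card (insert x E) = k"
      using that finE assms(3,4) by simp
    ultimately show ?thesis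
      using that assms(2) by (auto simp: missing_at_most_def ksubsets_def)
  qed
  have "deg (missing_at_most n k S r) E = card {x \<in> {1..n} - E. insert x E \<in> missing_at_most n k S r}"
    using assms by (intro deg_eq_card_extensions) (auto simp: missing_at_most_def)
  also have "\<dots> = card {x \<in> {1..n} - E. card (S - E) \<le> r + (if x \<in> S then 1 else 0)}"
    using ext by (intro arg_cong[where f = card] Collect_cong) blast
  also have "\<dots> = (if card (S - E) \<le> r then n + 1 - k else if card (S - E) = r + 1 then r + 1 else 0)"
  proof -
    consider "card (S - E) \<le> r" | "card (S - E) = r + 1" | "r + 1 < card (S - E)"
      by linarith
    then show ?thesis
    proof cases
      case 1
      then have "{x \<in> {1..n} - E. card (S - E) \<le> r + (if x \<in> S then 1 else 0)} = {1..n} - E"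
        by auto
      with 1 show ?thesis
        using assms finE by (simp add: card_Diff_subset)
    next
      case 2
      then have "{x \<in> {1..n} - E. card (S - E) \<le> r + (if x \<in> S then 1 else 0)} = S - E"
        using assms(1) by auto
      with 2 show ?thesis
        by simp
    next
      case 3
      then have "{x \<in> {1..n} - E. card (S - E) \<le> r + (if x \<in> S then 1 else 0)} = {}"
        by auto
      with 3 show ?thesis
        by simp
    qed
  qed
  finally show ?thesis .
qed

lemma co2_missing_at_most:
  assumes "S \<subseteq> {1..n}" "1 \<le> k"
  shows "co2 n k (missing_at_most n k S r) =
    (\<Sum>i\<le>k - 1. (card S choose i) * ((n - card S) choose (k - 1 - i)) *
       (if card S - i \<le> r then n + 1 - k else if card S - i = r + 1 then r + 1 else 0)^2)"
proof -
  define g where "g i = (if card S - i \<le> r then n + 1 - k else if card S - i = r + 1 then r + 1 else 0)^2" for i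
  have "card (S - E) = card S - card (E \<inter> S)" if "E \<subseteq> {1..n}" for E
    using that assms(1) by (metis card_Diff_subset_Int finite_Int finite_atLeastAtMost finite_subset inf_commute)
  then have "co2 n k (missing_at_most n k S r) = (\<Sum>E | E \<subseteq> {1..n} \<and> card E = k - 1. g (card (E \<inter> S)))"
    unfolding co2_def g_def using assms by (intro sum.cong) (simp_all add: deg_missing_at_most)
  also have "\<dots> = (\<Sum>i\<le>k - 1. (card S choose i) * ((n - card S) choose (k - 1 - i)) * g i)"
    using sum_subsets_by_card_Int[of "{1..n}" S g "k - 1"] assms(1) by (simp add: card_Diff_subset finite_subset)
  finally show ?thesis
    unfolding g_def .
qed

definition star :: "nat \<Rightarrow> nat \<Rightarrow> nat \<Rightarrow> nat set set" where
  "star n k t = {F \<in> ksubsets n k. {1..t} \<subseteq> F}"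

definition AK :: "nat \<Rightarrow> nat \<Rightarrow> nat \<Rightarrow> nat set set" where
  "AK n k t = {G \<in> ksubsets n k. t + 1 \<le> card (G \<inter> {1..t+2})}"

lemma finite_ksubsets_member: "X \<in> ksubsets n k \<Longrightarrow> finite X"
  unfolding ksubsets_def by (auto intro: finite_subset)

lemma star_eq_missing_at_most: "star n k t = missing_at_most n k {1..t} 0"
  unfolding star_def missing_at_most_def by (auto dest: finite_ksubsets_member)

lemma AK_eq_missing_at_most: "AK n k t = missing_at_most n k {1..t+2} 1"
proof -
  have "card ({1..t+2} - G) = t + 2 - card (G \<inter> {1..t+2})" for G :: "nat set"
    by (simp add: card_Diff_subset_Int inf_commute)
  then show ?thesis
    unfolding AK_def missing_at_most_def by auto
qed

lemma AK_eq_empty: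
  assumes "k \<le> t"
  shows "AK n k t = {}"
proof -
  have "card (G \<inter> {1..t+2}) \<le> k" if "G \<in> ksubsets n k" for G
    using that finite_ksubsets_member[OF that] by (auto simp: ksubsets_def intro: card_mono order.trans)
  with assms show ?thesis
    unfolding AK_def by fastforce
qed

lemma AK_Suc_eq_subsets: "AK n (t + 1) t = {G \<in> ksubsets n (t + 1). G \<subseteq> {1..t+2}}"
proof -
  have "t + 1 \<le> card (G \<inter> {1..t+2}) \<longleftrightarrow> G \<subseteq> {1..t+2}" if "G \<in> ksubsets n (t + 1)" for G
  proof
    assume "t + 1 \<le> card (G \<inter> {1..t+2})"
    moreover have "finite G" "card G = t + 1"
      using that finite_ksubsets_member[OF that] by (auto simp: ksubsets_def)
    ultimately have "G \<inter> {1..t+2} = G"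
      using card_mono[OF \<open>finite G\<close> Int_lower1, of "{1..t+2}"] by (intro card_subset_eq) auto
    then show "G \<subseteq> {1..t+2}"
      by blast
  next
    assume "G \<subseteq> {1..t+2}"
    then show "t + 1 \<le> card (G \<inter> {1..t+2})"
      using that by (simp add: Int_absorb2 ksubsets_def)
  qed
  then show ?thesis
    unfolding AK_def by blast
qed

lemma co2_empty: "co2 n k {} = 0"
  by (simp add: co2_def deg_def)

lemma co2_star:
  assumes "1 \<le> t" "t \<le> k" "k \<le> n"
  shows "co2 n k (star n k t) =
    (if t < k then (n + 1 - k)^2 * ((n - t) choose (k - 1 - t)) else 0) + t * ((n - t) choose (k - t))"
proof -
  define f where "f i = (t choose i) * ((n - t) choose (k - 1 - i)) *
       (if t \<le> i then n + 1 - k else if t - i = 1 then 1 else 0)^2" for i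
  have "co2 n k (star n k t) = (\<Sum>i\<le>k - 1. f i)"
    unfolding star_eq_missing_at_most f_def using assms by (subst co2_missing_at_most) (auto cong: if_cong)
  also have "\<dots> = (\<Sum>i\<in>{t - 1, t}. if i \<le> k - 1 then f i else 0)"
    by (rule sum_atMost_eq_sum_over_support) (auto simp: f_def)
  also have "\<dots> = (if t < k then (n + 1 - k)^2 * ((n - t) choose (k - 1 - t)) else 0) + t * ((n - t) choose (k - t))"
    using assms binomial_symmetric[of 1 t] by (auto simp: f_def)
  finally show ?thesis .
qed

lemma co2_AK:
  assumes "t + 1 \<le> k" "t + 2 \<le> n"
  shows "co2 n k (AK n k t) =
    (n + 1 - k)^2 * ((if t + 3 \<le> k then (n - t - 2) choose (k - t - 3) else 0) +
                     (if t + 2 \<le> k then (t + 2) * ((n - t - 2) choose (k - t - 2)) else 0)) +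
    2 * (t + 1) * (t + 2) * ((n - t - 2) choose (k - 1 - t))"
proof -
  define f where "f i = ((t + 2) choose i) * ((n - (t + 2)) choose (k - 1 - i)) *
       (if t + 2 - i \<le> 1 then n + 1 - k else if t + 2 - i = 2 then 2 else 0)^2" for i
  have "co2 n k (AK n k t) = (\<Sum>i\<le>k - 1. f i)"
    unfolding AK_eq_missing_at_most f_def using assms
    by (subst co2_missing_at_most) (auto simp: numeral_2_eq_2 cong: if_cong)
  also have "\<dots> = (\<Sum>i\<in>{t, t + 1, t + 2}. if i \<le> k - 1 then f i else 0)"
    by (rule sum_atMost_eq_sum_over_support) (auto simp: f_def)
  also have "\<dots> = f t + (if t + 2 \<le> k then f (t + 1) else 0) + (if t + 3 \<le> k then f (t + 2) else 0)"
    using assms by auto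
  also have "\<dots> = (n + 1 - k)^2 * ((if t + 3 \<le> k then (n - t - 2) choose (k - t - 3) else 0) +
                     (if t + 2 \<le> k then (t + 2) * ((n - t - 2) choose (k - t - 2)) else 0)) +
    2 * (t + 1) * (t + 2) * ((n - t - 2) choose (k - 1 - t))"
  proof -
    have "f t = 2 * (2 * ((t + 2) choose 2)) * ((n - t - 2) choose (k - 1 - t))"
      using binomial_symmetric[of 2 "t + 2"] by (simp add: f_def power2_eq_square)
    then have "f t = 2 * (t + 1) * (t + 2) * ((n - t - 2) choose (k - 1 - t))"
      by (simp add: choose_two)
    moreover have "f (t + 1) = (n + 1 - k)^2 * ((t + 2) * ((n - t - 2) choose (k - t - 2)))"
      using binomial_symmetric[of 1 "t + 2"] by (simp add: f_def)
    moreover have "f (t + 2) = (n + 1 - k)^2 * ((n - t - 2) choose (k - t - 3))"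
      by (simp add: f_def numeral_3_eq_3)
    ultimately show ?thesis
      by (simp add: algebra_simps)
  qed
  finally show ?thesis .
qed

lemma key_polynomial_inequality:
  fixes t j M :: nat
  assumes t: "1 \<le> t" and M: "t * (j + 2) + 1 \<le> M"
  shows "(j + 2) * t * (j + 1) * (M + 1)^2 + 2 * (j + 2) * (t + 1) * (t + 2) * M
       < (j + 2) * M * (M + 1)^2 + t * M * (M + 1)"
proof -
  have "2 * (j + 2) * (t + 1) * (t + 2) \<le> (j + 2) * (t + 1) * (t * (j + 2) + 3) + t * (t * (j + 2) + 2)"
  proof -
    obtain a where "t = a + 1"
      using t by (metis add.commute le_Suc_ex Suc_eq_plus1_left)
    then show ?thesis
      by (cases j) (simp_all add: algebra_simps)
  qed
  also have "\<dots> \<le> (j + 2) * (t + 1) * (M + 2) + t * (M + 1)"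
    using M by (intro add_mono[OF mult_le_mono2 mult_le_mono2]) simp_all
  finally have "2 * (j + 2) * (t + 1) * (t + 2) * M \<le> ((j + 2) * (t + 1) * (M + 2) + t * (M + 1)) * M"
    by (rule mult_le_mono1)
  also have "\<dots> < (j + 2) * (t + 1) * (M + 1)^2 + t * M * (M + 1)"
    by (simp add: power2_eq_square algebra_simps)
  finally have main: "2 * (j + 2) * (t + 1) * (t + 2) * M < (j + 2) * (t + 1) * (M + 1)^2 + t * M * (M + 1)" .
  define V where "V = M - t * (j + 1)"
  have V: "M = t * (j + 1) + V" "t + 1 \<le> V"
    using M by (simp_all add: V_def algebra_simps)
  have "(j + 2) * (t + 1) * (M + 1)^2 \<le> (j + 2) * V * (M + 1)^2"
    using V(2) by (intro mult_le_mono1 mult_le_mono2)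
  moreover have "(j + 2) * M * (M + 1)^2 = (j + 2) * t * (j + 1) * (M + 1)^2 + (j + 2) * V * (M + 1)^2"
    using V(1) by (metis add_mult_distrib mult.assoc mult.left_commute)
  ultimately show ?thesis
    using main by linarith
qed

lemma key_binomial_inequality:
  fixes t a j :: nat
  assumes "1 \<le> t" "t * (j + 2) + 1 \<le> a - j"
  shows "(a - j + 1)^2 * t * (a choose j) + 2 * (t + 1) * (t + 2) * (a choose (j + 1))
       < (a - j + 1)^2 * (a choose (j + 1)) + t * ((a + 2) choose (j + 2))"
proof -
  define M where "M = a - j"
  define x y z where "x = a choose j" and "y = a choose (j + 1)" and "z = (a + 2) choose (j + 2)"
  have "j + 1 \<le> a" "0 < M"
    using assms by (auto simp: M_def)
  then have "0 < y"
    by (simp add: y_def)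
  have absorb: "M * x = (j + 1) * y"
    unfolding M_def x_def y_def using binomial_absorb_comp[of a j] binomial_absorption[of j a] by simp
  have "(M + 1) * y \<le> (a + 2) * ((a + 1) choose (j + 1))"
    unfolding M_def y_def by (intro mult_le_mono binomial_right_mono) simp_all
  also have "\<dots> = (j + 2) * z"
    unfolding z_def using Suc_times_binomial[of "j + 1" "a + 1"] by simp
  finally have z_bound: "(M + 1) * y \<le> (j + 2) * z" .
  have "(j + 2) * M * ((M + 1)^2 * t * x + 2 * (t + 1) * (t + 2) * y)
      = (j + 2) * t * (M + 1)^2 * (M * x) + y * (2 * (j + 2) * (t + 1) * (t + 2) * M)"
    by (simp only: algebra_simps)
  also have "\<dots> = y * ((j + 2) * t * (j + 1) * (M + 1)^2 + 2 * (j + 2) * (t + 1) * (t + 2) * M)"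
    unfolding absorb by (simp only: algebra_simps)
  also have "\<dots> < y * ((j + 2) * M * (M + 1)^2 + t * M * (M + 1))"
    using key_polynomial_inequality[OF assms(1) assms(2)[folded M_def]] \<open>0 < y\<close> by (rule mult_strict_left_mono)
  also have "\<dots> = (j + 2) * M * (M + 1)^2 * y + t * M * ((M + 1) * y)"
    by (simp only: algebra_simps)
  also have "\<dots> \<le> (j + 2) * M * (M + 1)^2 * y + t * M * ((j + 2) * z)"
    using z_bound by simp
  also have "\<dots> = (j + 2) * M * ((M + 1)^2 * y + t * z)"
    by (simp only: algebra_simps)
  finally have "(M + 1)^2 * t * x + 2 * (t + 1) * (t + 2) * y < (M + 1)^2 * y + t * z"
    by (simp only: mult_less_cancel1)
  then show ?thesis
    unfolding M_def x_def y_def z_def using \<open>j + 1 \<le> a\<close> by simp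
qed

lemma co2_AK_less_co2_star:
  assumes "1 \<le> t" "t + 2 \<le> k" "(t + 1) * (k - t + 1) \<le> n"
  shows "co2 n k (AK n k t) < co2 n k (star n k t)"
proof -
  obtain j where k: "k = t + 2 + j"
    using assms(2) le_Suc_ex by blast
  define a where "a = n - t - 2"
  have "(t + 1) * (j + 3) \<le> n"
    using assms(3) by (simp add: k algebra_simps)
  then have n: "n = t + 2 + a" and bound: "t * (j + 2) + 1 \<le> a - j"
    by (simp_all add: a_def algebra_simps)
  define w where "w = (if j = 0 then 0 else a choose (j - 1))"
  have pascal: "(a + 2) choose (j + 1) = w + 2 * (a choose j) + (a choose (j + 1))"
    by (cases j) (simp_all add: w_def)
  have "co2 n k (star n k t) = (a - j + 1)^2 * ((a + 2) choose (j + 1)) + t * ((a + 2) choose (j + 2))"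
    using co2_star[of t k n] assms(1) bound by (simp add: k n Suc_diff_le)
  moreover have "co2 n k (AK n k t) =
      (a - j + 1)^2 * (w + (t + 2) * (a choose j)) + 2 * (t + 1) * (t + 2) * (a choose (j + 1))"
    using co2_AK[of t k n] bound by (simp add: k n w_def numeral_3_eq_3 Suc_diff_le cong: if_cong)
  ultimately show ?thesis
    using key_binomial_inequality[OF assms(1) bound] unfolding pascal by (simp add: algebra_simps)
qed

lemma co2_AK_le_co2_star_Suc:
  assumes "1 \<le> t" "2 * t + 2 \<le> n"
  shows "co2 n (t + 1) (AK n (t + 1) t) \<le> co2 n (t + 1) (star n (t + 1) t) \<and>
    (co2 n (t + 1) (AK n (t + 1) t) = co2 n (t + 1) (star n (t + 1) t) \<longrightarrow> n = 2 * t + 2)"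
proof -
  have "co2 n (t + 1) (star n (t + 1) t) = (n - t)^2 + t * (n - t)"
    using co2_star[of t "t + 1" n] assms by simp
  also have "\<dots> = (n - t + t) * (n - t)"
    by (simp only: power2_eq_square distrib_right)
  also have "\<dots> = n * (n - t)"
    using assms by simp
  finally have star: "co2 n (t + 1) (star n (t + 1) t) = n * (n - t)" .
  have AK: "co2 n (t + 1) (AK n (t + 1) t) = (2 * t + 2) * (t + 2)"
    using co2_AK[of t "t + 1" n] assms by simp
  have "(2 * t + 2) * (t + 2) \<le> n * (n - t)"
    using assms by (intro mult_le_mono) simp_all
  moreover have "(2 * t + 2) * (t + 2) < n * (n - t)" if "2 * t + 2 < n"
    using that by (intro mult_less_le_imp_less) simp_all
  ultimately show ?thesis
    unfolding star AK using assms(2) by fastforce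
qed

lemma bij_betw_mapping_subsetE:
  assumes "finite U" "A \<subseteq> U" "B \<subseteq> U" "card A = card B"
  obtains \<sigma> where "bij_betw \<sigma> U U" "\<sigma> ` A = B"
proof -
  have fin: "finite A" "finite B"
    using assms finite_subset by auto
  obtain f where f: "bij_betw f A B"
    using finite_same_card_bij fin assms(4) by blast
  have "card (U - A) = card (U - B)"
    using assms fin by (simp add: card_Diff_subset)
  then obtain g where g: "bij_betw g (U - A) (U - B)"
    using finite_same_card_bij assms(1) by blast
  define \<sigma> where "\<sigma> x = (if x \<in> A then f x else g x)" for x
  have "bij_betw \<sigma> A B"
    using f by (rule bij_betw_cong[THEN iffD1, rotated]) (simp add: \<sigma>_def)
  moreover have "bij_betw \<sigma> (U - A) (U - B)"
    using g by (rule bij_betw_cong[THEN iffD1, rotated]) (simp add: \<sigma>_def)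
  ultimately have "bij_betw \<sigma> (A \<union> (U - A)) (B \<union> (U - B))"
    by (rule bij_betw_combine) blast
  moreover have "A \<union> (U - A) = U" "B \<union> (U - B) = U"
    using assms by auto
  ultimately have "bij_betw \<sigma> U U"
    by simp
  moreover have "\<sigma> ` A = B"
    using \<open>bij_betw \<sigma> A B\<close> by (simp add: bij_betw_def)
  ultimately show ?thesis
    by (rule that)
qed

lemma image_supersets_ksubsets:
  assumes \<sigma>: "bij_betw \<sigma> {1..n} {1..n}" and "A \<subseteq> {1..n}"
  shows "(\<lambda>X. \<sigma> ` X) ` {F \<in> ksubsets n k. A \<subseteq> F} = {F \<in> ksubsets n k. \<sigma> ` A \<subseteq> F}"
proof (intro set_eqI iffI)
  fix Y assume "Y \<in> (\<lambda>X. \<sigma> ` X) ` {F \<in> ksubsets n k. A \<subseteq> F}"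
  then obtain X where X: "X \<subseteq> {1..n}" "card X = k" "A \<subseteq> X" "Y = \<sigma> ` X"
    by (auto simp: ksubsets_def)
  moreover have "inj_on \<sigma> X"
    using \<sigma> X(1) bij_betw_imp_inj_on inj_on_subset by blast
  ultimately have "card Y = k"
    by (simp add: card_image)
  with X \<sigma> show "Y \<in> {F \<in> ksubsets n k. \<sigma> ` A \<subseteq> F}"
    by (auto simp: ksubsets_def bij_betw_def)
next
  fix Y assume "Y \<in> {F \<in> ksubsets n k. \<sigma> ` A \<subseteq> F}"
  then have Y: "Y \<subseteq> {1..n}" "card Y = k" "\<sigma> ` A \<subseteq> Y"
    by (auto simp: ksubsets_def)
  define X where "X = {x \<in> {1..n}. \<sigma> x \<in> Y}"
  have "X \<subseteq> {1..n}"
    by (auto simp: X_def)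
  have image: "\<sigma> ` X = Y"
  proof
    show "Y \<subseteq> \<sigma> ` X"
    proof
      fix y assume "y \<in> Y"
      then obtain x where "x \<in> {1..n}" "y = \<sigma> x"
        using \<sigma> Y(1) unfolding bij_betw_def by blast
      with \<open>y \<in> Y\<close> show "y \<in> \<sigma> ` X"
        by (auto simp: X_def)
    qed
  qed (auto simp: X_def)
  have "inj_on \<sigma> X"
    using \<sigma> \<open>X \<subseteq> {1..n}\<close> bij_betw_imp_inj_on inj_on_subset by blast
  then have "card X = k"
    using Y(2) image card_image by fastforce
  moreover have "A \<subseteq> X"
    using assms(2) Y(3) unfolding X_def by auto
  ultimately show "Y \<in> (\<lambda>X. \<sigma> ` X) ` {F \<in> ksubsets n k. A \<subseteq> F}"
    using \<open>X \<subseteq> {1..n}\<close> image by (intro image_eqI[where x = X]) (simp_all add: ksubsets_def)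
qed

lemma iso_fam_supersets:
  assumes "A \<subseteq> {1..n}" "B \<subseteq> {1..n}" "card A = card B"
  shows "iso_fam n {F \<in> ksubsets n k. A \<subseteq> F} {F \<in> ksubsets n k. B \<subseteq> F}"
proof -
  obtain \<sigma> where \<sigma>: "bij_betw \<sigma> {1..n} {1..n}" "\<sigma> ` A = B"
    using bij_betw_mapping_subsetE[OF _ assms] by blast
  then show ?thesis
    unfolding iso_fam_def using image_supersets_ksubsets[OF \<sigma>(1) assms(1)] by blast
qed

lemma complement_image_ksubsets:
  assumes "k \<le> n"
  shows "(\<lambda>G. {1..n} - G) ` {G \<in> ksubsets n k. G \<subseteq> C} = {H \<in> ksubsets n (n - k). {1..n} - C \<subseteq> H}"
proof (intro set_eqI iffI)
  fix H assume "H \<in> (\<lambda>G. {1..n} - G) ` {G \<in> ksubsets n k. G \<subseteq> C}"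
  then show "H \<in> {H \<in> ksubsets n (n - k). {1..n} - C \<subseteq> H}"
    by (auto simp: ksubsets_def card_Diff_subset finite_subset)
next
  fix H assume H: "H \<in> {H \<in> ksubsets n (n - k). {1..n} - C \<subseteq> H}"
  then have "card ({1..n} - H) = k"
    using assms by (auto simp: ksubsets_def card_Diff_subset finite_subset)
  with H show "H \<in> (\<lambda>G. {1..n} - G) ` {G \<in> ksubsets n k. G \<subseteq> C}"
    by (intro image_eqI[where x = "{1..n} - H"]) (auto simp: ksubsets_def)
qed

lemma iso_star_complement_AK:
  assumes "n = 2 * t + 2"
  shows "iso_fam n (star n (t + 1) t) ((\<lambda>G. {1..n} - G) ` AK n (t + 1) t)"
proof -
  have "(\<lambda>G. {1..n} - G) ` AK n (t + 1) t = {H \<in> ksubsets n (t + 1). {t+3..n} \<subseteq> H}"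
  proof -
    have "{1..n} - {1..t+2} = {t+3..n}"
      by auto
    then show ?thesis
      unfolding AK_Suc_eq_subsets using complement_image_ksubsets[of "t + 1" n "{1..t+2}"] assms by simp
  qed
  moreover have "iso_fam n (star n (t + 1) t) {H \<in> ksubsets n (t + 1). {t+3..n} \<subseteq> H}"
    unfolding star_def using assms by (intro iso_fam_supersets) auto
  ultimately show ?thesis
    by simp
qed

theorem lemma4p4:
  fixes t k n :: nat
  assumes "0 < t" "t \<le> k" "k \<le> n" "(t + 1) * (k - t + 1) \<le> n"
  defines "\<F> \<equiv> {F \<in> ksubsets n k. {1..t} \<subseteq> F}"
      and "\<G> \<equiv> {G \<in> ksubsets n k. t + 1 \<le> card (G \<inter> {1..t+2})}"
  shows "co2 n k \<G> \<le> co2 n k \<F> \<and>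
         (co2 n k \<G> = co2 n k \<F> \<longrightarrow>
           (k = t + 1 \<and> n = 2 * t + 2 \<and> iso_fam n \<F> ((\<lambda>G. {1..n} - G) ` \<G>)))"
proof -
  have families: "\<F> = star n k t" "\<G> = AK n k t"
    unfolding \<F>_def \<G>_def star_def AK_def by simp_all
  consider "k = t" | "k = t + 1" | "t + 2 \<le> k"
    using assms(2) by linarith
  then show ?thesis
  proof cases
    case 1
    have "co2 n k \<F> = t"
      using co2_star[of t k n] 1 assms(1,3) by (simp add: families)
    moreover have "\<G> = {}"
      using 1 by (simp add: families AK_eq_empty)
    ultimately show ?thesis
      using assms(1) by (simp add: co2_empty)
  next
    case 2
    with assms(1,4) have "co2 n k \<G> \<le> co2 n k \<F> \<and> (co2 n k \<G> = co2 n k \<F> \<longrightarrow> n = 2 * t + 2)"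
      unfolding families 2 by (intro co2_AK_le_co2_star_Suc) simp_all
    moreover have "iso_fam n \<F> ((\<lambda>G. {1..n} - G) ` \<G>)" if "n = 2 * t + 2"
      unfolding families 2 using that by (rule iso_star_complement_AK)
    ultimately show ?thesis
      using 2 by blast
  next
    case 3
    with assms(1,4) have "co2 n k \<G> < co2 n k \<F>"
      unfolding families by (intro co2_AK_less_co2_star) simp_all
    then show ?thesis
      by simp
  qed
qed

end
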